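(* Let $\Lambda(f)$ be the envelope class defined by a function $f$ that is ultimately monotonically non-increasing, and suppose the envelope is Fréchet with index $\gamma>0$, i.e. the smoothed envelope distribution $F$ belongs to $\mathrm{MDA}(\gamma)$. Let $m_n$ be the solution $x$ of $\overline F(x)=x/n$. Then there is a constant $\kappa_\gamma>0$ such that for all sufficiently large $n$, $$R^+(\Lambda_n)\ge \kappa_\gamma\, m_n .$$
   Context: Envelope classes: for $f:\mathbb N_+\to(0,1]$ with $1<\sum_j f(j)<\infty$, $\Lambda(f)$ is the set of stationary memoryless (i.i.d.) sources on $\mathbb N_+$ with marginal $\mathbb P_1\{j\}\le f(j)$ for all $j$; $\Lambda_n$ is the set of their restrictions to $n$ symbols. The envelope distribution is $F(k)=1-\sum_{j>k}f(j)$ when this sum is $<1$, else $0$; a smoothed envelope distribution (still denoted $F$) is a c.d.f. on $\mathbb R_+$ coinciding with $F$ on $\mathbb N$ with continuous derivative, positive wherever $F(\lfloor x\rfloor)\in(0,1)$. $\overline F=1-F$, $U(t)=\overline F^{-1}(1/t)$, and $F\in\mathrm{MDA}(\gamma)$ means there are $A_n>0$ with $F^n(A_nx+U(n))\to\exp(-(1+\gamma x)^{-1/\gamma})$ for all $x$ with $1+\gamma x>0$. The minimax redundancy is $R^+(\Lambda_n)=\inf_{Q_n}\sup_{\mathbb P\in\Lambda}D(\mathbb P_n,Q_n)$, the infimum over probability distributions $Q_n$ on $\mathbb N_+^n$, with $D$ the Kullback–Leibler divergence in bits. *)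

theory Defs
  imports "HOL-Analysis.Analysis"
begin

definition words :: "nat \<Rightarrow> nat list set" where
  "words n = {xs. length xs = n \<and> (\<forall>x\<in>set xs. 1 \<le> x)}"

definition is_envelope :: "(nat \<Rightarrow> real) \<Rightarrow> bool" where
  "is_envelope f \<longleftrightarrow> (\<forall>j\<ge>1. 0 < f j \<and> f j \<le> 1) \<and> summable (\<lambda>i. f (Suc i))
      \<and> 1 < (\<Sum>i. f (Suc i))"

text \<open>Marginals of the memoryless sources in Lambda(f) (values at 0 irrelevant).\<close>
definition envelope_class :: "(nat \<Rightarrow> real) \<Rightarrow> (nat \<Rightarrow> real) set" where
  "envelope_class f = {p. (\<forall>j\<ge>1. 0 \<le> p j \<and> p j \<le> f j) \<and> (\<lambda>i. p (Suc i)) sums 1}"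

definition iid_prob :: "(nat \<Rightarrow> real) \<Rightarrow> nat list \<Rightarrow> real" where
  "iid_prob p xs = prod_list (map p xs)"

definition kl_div :: "'a set \<Rightarrow> ('a \<Rightarrow> real) \<Rightarrow> ('a \<Rightarrow> real) \<Rightarrow> ereal" where
  "kl_div S P Q =
    (if (\<exists>x\<in>S. 0 < P x \<and> Q x \<le> 0) \<or> \<not> ((\<lambda>x. P x * log 2 (P x / Q x)) summable_on S)
     then \<infinity> else ereal (\<Sum>\<^sub>\<infinity>x\<in>S. P x * log 2 (P x / Q x)))"

definition minimax_redundancy :: "(nat \<Rightarrow> real) \<Rightarrow> nat \<Rightarrow> ereal" where
  "minimax_redundancy f n =
    (INF Q \<in> {Q. (\<forall>x\<in>words n. 0 \<le> Q x) \<and> (Q has_sum 1) (words n)}.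
       SUP p \<in> envelope_class f. kl_div (words n) (iid_prob p) Q)"

definition envelope_cdf :: "(nat \<Rightarrow> real) \<Rightarrow> nat \<Rightarrow> real" where
  "envelope_cdf f k = (let s = (\<Sum>i. f (Suc (i + k))) in if s < 1 then 1 - s else 0)"

definition smoothed_envelope_cdf :: "(nat \<Rightarrow> real) \<Rightarrow> (real \<Rightarrow> real) \<Rightarrow> bool" where
  "smoothed_envelope_cdf f Fs \<longleftrightarrow>
     (\<forall>x<0. Fs x = 0) \<and> mono Fs \<and> (Fs \<longlongrightarrow> 1) at_top \<and>
     (\<forall>k::nat. Fs (real k) = envelope_cdf f k) \<and>
     (\<exists>F'. continuous_on {0..} F' \<and>
        (\<forall>x\<ge>0. (Fs has_real_derivative F' x) (at x within {0..}) \<and>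
           (0 < envelope_cdf f (nat \<lfloor>x\<rfloor>) \<and> envelope_cdf f (nat \<lfloor>x\<rfloor>) < 1 \<longrightarrow> 0 < F' x)))"

definition tail_quantile :: "(real \<Rightarrow> real) \<Rightarrow> real \<Rightarrow> real" where
  "tail_quantile Fs t = (THE x. 1 - Fs x = 1 / t)"

definition gev :: "real \<Rightarrow> real \<Rightarrow> real" where
  "gev \<gamma> x = (if \<gamma> = 0 then exp (- exp (- x)) else exp (- ((1 + \<gamma> * x) powr (- 1 / \<gamma>))))"

definition in_MDA :: "(real \<Rightarrow> real) \<Rightarrow> real \<Rightarrow> bool" where
  "in_MDA Fs \<gamma> \<longleftrightarrow> (\<exists>A :: nat \<Rightarrow> real. (\<forall>n. 0 < A n) \<and>
     (\<forall>x. 0 < 1 + \<gamma> * x \<longrightarrow>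
        (\<lambda>n. Fs (A n * x + tail_quantile Fs (real n)) ^ n) \<longlonglongrightarrow> gev \<gamma> x))"

definition m_seq :: "(real \<Rightarrow> real) \<Rightarrow> nat \<Rightarrow> real" where
  "m_seq Fs n = (THE x. 1 - Fs x = x / real n)"

end

theory Submission
  imports Defs
begin

text \<open>A coding distribution \<open>Q\<close> for \<open>n\<close> symbols must be good simultaneously for all \<open>2 ^ N\<close>
  sources obtained by placing mass \<open>q\<close> on one of the two symbols of each of \<open>N\<close> disjoint pairs.
  A word meeting \<open>c\<close> pairs has positive probability under at most \<open>2 ^ (N - c)\<close> of them, and a
  Kraft-type averaging argument shows that some source has divergence at least the expected number
  \<open>N (1 - (1 - q) ^ n)\<close> of pairs met.  The pairs fit under the envelope with \<open>q \<approx> 1 / n\<close> and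
  \<open>N \<approx> m_n / 2\<close>: in the Frechet domain of attraction the tail satisfies
  \<open>1 - F(\<lambda> t) \<le> (1 - F(t)) / 4\<close> for some \<open>\<lambda>\<close> and all large \<open>t\<close>, so the envelope puts mass of
  order \<open>m_n / n\<close> on \<open>(m_n, \<lambda> m_n]\<close>, and monotonicity then bounds \<open>f j\<close> below by a multiple of
  \<open>1 / n\<close> for all large \<open>j \<le> m_n\<close>.  Hence \<open>R\<^sup>+(\<Lambda>\<^sub>n) \<ge> (m_n / 4) (1 - exp (- 1 / (4 \<lambda>)))\<close>.\<close>

lemma has_sum_diff:
  fixes f g :: "'a \<Rightarrow> real"
  assumes "(f has_sum a) A" "(g has_sum b) A"
  shows "((\<lambda>x. f x - g x) has_sum a - b) A"
  using has_sum_add[OF assms(1) has_sum_uminusI[OF assms(2)]] by simp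

lemma has_sum_sum:
  fixes g :: "'i \<Rightarrow> 'a \<Rightarrow> real"
  assumes "finite I" "\<And>i. i \<in> I \<Longrightarrow> (g i has_sum s i) A"
  shows "((\<lambda>x. \<Sum>i\<in>I. g i x) has_sum (\<Sum>i\<in>I. s i)) A"
  using assms by (induction I rule: finite_induct) (auto intro: has_sum_add)

lemma words_0: "words 0 = {[]}"
  by (auto simp: words_def)

lemma words_Suc: "words (Suc n) = (\<lambda>(j, xs). j # xs) ` ({1..} \<times> words n)"
proof -
  have "xs \<in> (\<lambda>(j, xs). j # xs) ` ({1..} \<times> words n)" if "xs \<in> words (Suc n)" for xs
    using that by (cases xs) (auto simp: words_def)
  then show ?thesis
    by (auto simp: words_def)
qed

lemma has_sum_iid_prob:
  fixes p :: "nat \<Rightarrow> real"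
  assumes nonneg: "\<And>j. 1 \<le> j \<Longrightarrow> 0 \<le> p j" and sums: "(\<lambda>i. p (Suc i)) sums s"
  shows "(iid_prob p has_sum s ^ n) (words n)"
proof (induction n)
  case 0
  then show ?case
    by (rule has_sum_finiteI) (simp_all add: words_0 iid_prob_def)
next
  case (Suc n)
  have "((\<lambda>i. p (Suc i)) has_sum s) UNIV"
    using sums nonneg by (intro sums_nonneg_imp_has_sum) auto
  moreover have "{1::nat..} = Suc ` UNIV"
    by (auto simp: image_iff Suc_le_eq gr0_conv_Suc)
  ultimately have p_sum: "(p has_sum s) {1..}"
    by (simp add: has_sum_reindex o_def)
  have iid_nonneg: "0 \<le> iid_prob p xs" if "xs \<in> words n" for xs
    using that nonneg by (auto simp: iid_prob_def words_def intro!: prod_list_nonneg)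
  let ?g = "\<lambda>(j, xs). p j * iid_prob p xs"
  have fibre: "((\<lambda>xs. ?g (j, xs)) has_sum p j * s ^ n) (words n)" for j
    using Suc.IH by (simp add: has_sum_cmult_right)
  have "(?g has_sum s * s ^ n) ({1..} \<times> words n)"
  proof (rule has_sum_SigmaI[OF fibre])
    show "((\<lambda>j. p j * s ^ n) has_sum s * s ^ n) {1..}"
      using p_sum by (rule has_sum_cmult_left)
    show "?g summable_on {1..} \<times> words n"
      using has_sum_imp_summable[OF has_sum_cmult_left[OF p_sum]] nonneg iid_nonneg
      by (intro summable_on_SigmaI[OF fibre]) auto
  qed
  moreover have "inj_on (\<lambda>(j, xs). j # xs) ({1..} \<times> words n)"
    by (auto simp: inj_on_def)
  ultimately show ?case
    by (simp add: words_Suc has_sum_reindex o_def case_prod_unfold iid_prob_def)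
qed

lemma iid_prob_avoiding:
  "iid_prob (\<lambda>j. if j \<in> B then 0 else p j) xs = (if set xs \<inter> B \<noteq> {} then 0 else iid_prob p xs)"
  by (induction xs) (auto simp: iid_prob_def)

lemma has_sum_iid_prob_avoiding:
  fixes p :: "nat \<Rightarrow> real"
  assumes nonneg: "\<And>j. 1 \<le> j \<Longrightarrow> 0 \<le> p j" and sums: "(\<lambda>i. p (Suc i)) sums 1"
    and B: "finite B" "B \<subseteq> {1..}"
  shows "((\<lambda>xs. if set xs \<inter> B \<noteq> {} then 0 else iid_prob p xs) has_sum (1 - sum p B) ^ n) (words n)"
proof -
  have "(\<lambda>i. if Suc i \<in> B then p (Suc i) else 0) sums (\<Sum>i\<in>{i. Suc i \<in> B}. p (Suc i))"
    using finite_vimageI[OF B(1), of Suc] by (intro sums_If_finite) (simp add: vimage_def)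
  also have "(\<Sum>i\<in>{i. Suc i \<in> B}. p (Suc i)) = sum p (Suc ` {i. Suc i \<in> B})"
    by (simp add: sum.reindex)
  also have "Suc ` {i. Suc i \<in> B} = B"
    using B(2) by (auto simp: image_iff dest!: Suc_le_D)
  finally have "(\<lambda>i. p (Suc i) - (if Suc i \<in> B then p (Suc i) else 0)) sums (1 - sum p B)"
    by (rule sums_diff[OF sums])
  then have "(\<lambda>i. (\<lambda>j. if j \<in> B then 0 else p j) (Suc i)) sums (1 - sum p B)"
    by (simp add: if_distrib cong: if_cong)
  from has_sum_iid_prob[OF _ this] nonneg show ?thesis
    unfolding iid_prob_avoiding by simp
qed

lemma has_sum_card_events:
  fixes P :: "'a \<Rightarrow> real"
  assumes I: "finite I" and P: "(P has_sum 1) W"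
    and miss: "\<And>i. i \<in> I \<Longrightarrow> ((\<lambda>x. if E i x then 0 else P x) has_sum r i) W"
  shows "((\<lambda>x. P x * real (card {i\<in>I. E i x})) has_sum (\<Sum>i\<in>I. 1 - r i)) W"
proof -
  have "((\<lambda>x. \<Sum>i\<in>I. P x - (if E i x then 0 else P x)) has_sum (\<Sum>i\<in>I. 1 - r i)) W"
    using I P miss by (intro has_sum_sum has_sum_diff) auto
  moreover have "(\<Sum>i\<in>I. P x - (if E i x then 0 else P x)) = P x * real (card {i\<in>I. E i x})" for x
    using sum.inter_filter[OF I, of "\<lambda>_. P x" "\<lambda>i. E i x"] by (simp add: if_distrib mult.commute cong: if_cong)
  ultimately show ?thesis
    by simp
qed

section \<open>A counting lower bound for the divergence\<close>

lemma mult_log2_div_ge: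
  fixes P Q c :: real
  assumes "0 < P" "0 < Q"
  shows "P * c + (P - 2 powr c * Q) / ln 2 \<le> P * log 2 (P / Q)"
proof -
  define y where "y = 2 powr c * Q / P"
  have y: "0 < y"
    using assms by (simp add: y_def)
  have "log 2 (P / Q) = c - log 2 y"
    using assms by (simp add: y_def log_divide log_mult log_powr)
  then have "P * log 2 (P / Q) = P * c - P * ln y / ln 2"
    by (simp add: log_def right_diff_distrib)
  moreover have "P * ln y \<le> P * (y - 1)"
    using ln_le_minus_one[OF y] assms by (intro mult_left_mono) auto
  moreover have "P * (y - 1) = 2 powr c * Q - P"
    using assms by (simp add: y_def field_simps)
  ultimately show ?thesis
    by (smt (verit, ccfv_threshold) divide_right_mono ln_gt_zero diff_divide_distrib)
qed

lemma kl_div_ge_weighted_support_mass: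
  fixes P Q :: "'a \<Rightarrow> real" and c :: "'a \<Rightarrow> nat"
  assumes P: "(P has_sum 1) W" "\<And>x. x \<in> W \<Longrightarrow> 0 \<le> P x"
    and E: "((\<lambda>x. P x * real (c x)) has_sum E) W"
    and G: "((\<lambda>x. if 0 < P x then 2 ^ c x * Q x else 0) has_sum G) W"
  shows "ereal (E + (1 - G) / ln 2) \<le> kl_div W P Q"
proof (cases "kl_div W P Q = \<infinity>")
  case False
  define D where "D = (\<lambda>x. P x * log 2 (P x / Q x))"
  have support: "\<And>x. x \<in> W \<Longrightarrow> 0 < P x \<Longrightarrow> 0 < Q x" and D: "D summable_on W"
    and kl: "kl_div W P Q = ereal (infsum D W)"
    using False by (auto simp: kl_div_def D_def not_le split: if_splits)
  have "((\<lambda>x. P x * real (c x) + (P x - (if 0 < P x then 2 ^ c x * Q x else 0)) / ln 2)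
          has_sum E + (1 - G) / ln 2) W"
    by (intro has_sum_add[OF E] has_sum_divide_const has_sum_diff[OF P(1) G])
  moreover have "(D has_sum infsum D W) W"
    using D by simp
  moreover have "P x * real (c x) + (P x - (if 0 < P x then 2 ^ c x * Q x else 0)) / ln 2 \<le> D x"
    if x: "x \<in> W" for x
  proof (cases "0 < P x")
    case True
    then show ?thesis
      using mult_log2_div_ge[OF True support[OF x True], of "real (c x)"]
      by (simp add: D_def powr_realpow)
  next
    case False
    then show ?thesis
      using P(2)[OF x] by (simp add: D_def)
  qed
  ultimately have "E + (1 - G) / ln 2 \<le> infsum D W"
    by (rule has_sum_mono)
  then show ?thesis
    by (simp add: kl)
qed simp

text \<open>Summed over the family, the weighted masses \<open>G\<close> of the previous lemma add up to at most
  the number of sources, so one of them is at most \<open>1\<close>.\<close>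
lemma kl_div_ge_by_counting:
  fixes P :: "'s \<Rightarrow> 'a \<Rightarrow> real" and Q :: "'a \<Rightarrow> real" and c :: "'a \<Rightarrow> nat"
  assumes fin: "finite \<Theta>" and ne: "\<Theta> \<noteq> {}"
    and P: "\<And>S. S \<in> \<Theta> \<Longrightarrow> (P S has_sum 1) W" "\<And>S x. S \<in> \<Theta> \<Longrightarrow> x \<in> W \<Longrightarrow> 0 \<le> P S x"
    and Q: "(Q has_sum 1) W" "\<And>x. x \<in> W \<Longrightarrow> 0 \<le> Q x"
    and count: "\<And>x. x \<in> W \<Longrightarrow> real (card {S\<in>\<Theta>. 0 < P S x}) * 2 ^ c x \<le> real (card \<Theta>)"
    and E: "\<And>S. S \<in> \<Theta> \<Longrightarrow> ((\<lambda>x. P S x * real (c x)) has_sum E) W"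
  shows "\<exists>S\<in>\<Theta>. ereal E \<le> kl_div W (P S) Q"
proof -
  define g where "g S x = (if 0 < P S x then 2 ^ c x * Q x else 0)" for S x
  define M where "M = real (card \<Theta>)"
  have g_sum_le: "(\<Sum>S\<in>\<Theta>. g S x) \<le> M * Q x" if x: "x \<in> W" for x
  proof -
    have "(\<Sum>S\<in>\<Theta>. g S x) = real (card {S\<in>\<Theta>. 0 < P S x}) * 2 ^ c x * Q x"
      using fin by (simp add: g_def sum.inter_filter[symmetric])
    also have "\<dots> \<le> M * Q x"
      using count[OF x] Q(2)[OF x] by (simp add: M_def mult_right_mono)
    finally show ?thesis .
  qed
  have g_nonneg: "0 \<le> g S x" if "x \<in> W" for S x
    using Q(2)[OF that] by (simp add: g_def)
  have g_le: "g S x \<le> M * Q x" if "S \<in> \<Theta>" "x \<in> W" for S x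
  proof -
    have "g S x \<le> (\<Sum>S\<in>\<Theta>. g S x)"
      using that fin g_nonneg by (intro member_le_sum) auto
    also have "\<dots> \<le> M * Q x"
      by (rule g_sum_le[OF that(2)])
    finally show ?thesis .
  qed
  have g_summable: "g S summable_on W" if "S \<in> \<Theta>" for S
  proof (rule summable_on_comparison_test)
    show "(\<lambda>x. M * Q x) summable_on W"
      using has_sum_cmult_right[OF Q(1)] by (rule has_sum_imp_summable)
  qed (use g_le[OF that] g_nonneg in auto)
  have "(\<Sum>S\<in>\<Theta>. infsum (g S) W) \<le> M * 1"
  proof (rule has_sum_mono[OF has_sum_sum[OF fin] has_sum_cmult_right[OF Q(1)] g_sum_le])
    show "\<And>S. S \<in> \<Theta> \<Longrightarrow> (g S has_sum infsum (g S) W) W"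
      using g_summable by simp
  qed
  then obtain S where S: "S \<in> \<Theta>" and small: "infsum (g S) W \<le> 1"
    using sum_strict_mono[OF fin ne, of "\<lambda>_. 1" "\<lambda>S. infsum (g S) W"]
    by (force simp: M_def not_le)
  have "ereal (E + (1 - infsum (g S) W) / ln 2) \<le> kl_div W (P S) Q"
    using g_summable[OF S] unfolding g_def
    by (intro kl_div_ge_weighted_support_mass[OF P(1,2)[OF S] E[OF S]]) simp_all
  moreover have "E \<le> E + (1 - infsum (g S) W) / ln 2"
    using small by simp
  ultimately show ?thesis
    using S by (meson ereal_less_eq(3) order_trans)
qed

lemma card_subsets_with_trace_le:
  assumes "H \<subseteq> U" "finite U"
  shows "card {S. S \<subseteq> U \<and> S \<inter> H = R} \<le> 2 ^ (card U - card H)"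
proof -
  have "{S. S \<subseteq> U \<and> S \<inter> H = R} \<subseteq> (\<lambda>T. T \<union> R) ` Pow (U - H)"
  proof
    fix S assume "S \<in> {S. S \<subseteq> U \<and> S \<inter> H = R}"
    then have "S = (S - H) \<union> R" "S - H \<in> Pow (U - H)"
      by auto
    then show "S \<in> (\<lambda>T. T \<union> R) ` Pow (U - H)"
      by blast
  qed
  then have "card {S. S \<subseteq> U \<and> S \<inter> H = R} \<le> card ((\<lambda>T. T \<union> R) ` Pow (U - H))"
    using assms by (intro card_mono) auto
  also have "\<dots> \<le> card (Pow (U - H))"
    using assms by (intro card_image_le) auto
  also have "\<dots> = 2 ^ (card U - card H)"
    using assms by (simp add: card_Pow card_Diff_subset finite_subset)
  finally show ?thesis .
qed

section \<open>Block sources\<close>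

text \<open>Block \<open>b < N\<close> consists of the symbols \<open>J + 2 * b\<close> and \<open>J + 2 * b + 1\<close>; the source puts
  mass \<open>q\<close> on the first one if \<open>b \<notin> S\<close> and on the second one if \<open>b \<in> S\<close>, and agrees with \<open>r\<close>
  elsewhere.\<close>
definition block_source :: "(nat \<Rightarrow> real) \<Rightarrow> nat \<Rightarrow> nat \<Rightarrow> real \<Rightarrow> nat set \<Rightarrow> nat \<Rightarrow> real" where
  "block_source r J N q S j =
     r j + (if J \<le> j \<and> j < J + 2 * N \<and> (odd (j - J) \<longleftrightarrow> (j - J) div 2 \<in> S) then q else 0)"

lemma block_source_even:
  "b < N \<Longrightarrow> r (J + 2 * b) = 0 \<Longrightarrow> block_source r J N q S (J + 2 * b) = (if b \<in> S then 0 else q)"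
  by (simp add: block_source_def)

lemma block_source_odd:
  "b < N \<Longrightarrow> r (Suc (J + 2 * b)) = 0 \<Longrightarrow>
    block_source r J N q S (Suc (J + 2 * b)) = (if b \<in> S then q else 0)"
  by (simp add: block_source_def)

lemma sum_atLeastLessThan_pairs:
  fixes h :: "nat \<Rightarrow> 'a::comm_monoid_add"
  shows "(\<Sum>i\<in>{a..<a + 2 * N}. h i) = (\<Sum>b<N. h (a + 2 * b) + h (a + 2 * b + 1))"
proof (induction N)
  case (Suc N)
  have "a + 2 * Suc N = Suc (Suc (a + 2 * N))"
    by simp
  then show ?case
    using Suc by (simp add: add.assoc)
qed simp

lemma block_source_sums:
  assumes r: "(\<lambda>i. r (Suc i)) sums s" and r_block: "\<And>j. J \<le> j \<Longrightarrow> j < J + 2 * N \<Longrightarrow> r j = 0"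
    and J: "1 \<le> J"
  shows "(\<lambda>i. block_source r J N q S (Suc i)) sums (s + real N * q)"
proof -
  define blk where "blk j = block_source r J N q S j - r j" for j
  have "(\<lambda>i. blk (Suc i)) sums (\<Sum>i\<in>{J - 1..<J - 1 + 2 * N}. blk (Suc i))"
    using J by (intro sums_finite) (auto simp: blk_def block_source_def)
  also have "\<dots> = (\<Sum>b<N. blk (Suc (J - 1 + 2 * b)) + blk (Suc (J - 1 + 2 * b + 1)))"
    by (rule sum_atLeastLessThan_pairs)
  also have "\<dots> = (\<Sum>b<N. blk (J + 2 * b) + blk (J + 2 * b + 1))"
    using J by simp
  also have "\<dots> = (\<Sum>b<N. q)"
    using r_block by (intro sum.cong) (simp_all add: blk_def block_source_even block_source_odd)
  also have "\<dots> = real N * q"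
    by simp
  finally have "(\<lambda>i. blk (Suc i)) sums (real N * q)" .
  from sums_add[OF r this] show ?thesis
    by (simp add: blk_def)
qed

lemma block_source_positive_on_block:
  assumes r_block: "\<And>j. J \<le> j \<Longrightarrow> j < J + 2 * N \<Longrightarrow> r j = 0"
    and pos: "0 < iid_prob (block_source r J N q S) x" and b: "b < N"
    and hit: "set x \<inter> {J + 2 * b, J + 2 * b + 1} \<noteq> {}"
  shows "b \<in> S \<longleftrightarrow> J + 2 * b + 1 \<in> set x"
proof -
  have nonzero: "block_source r J N q S j \<noteq> 0" if "j \<in> set x" for j
  proof
    assume "block_source r J N q S j = 0"
    then have "iid_prob (block_source r J N q S) x = 0"
      using that by (force simp: iid_prob_def prod_list_zero_iff)
    with pos show False
      by simp
  qed
  have even: "block_source r J N q S (J + 2 * b) = (if b \<in> S then 0 else q)"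
    and odd: "block_source r J N q S (J + 2 * b + 1) = (if b \<in> S then q else 0)"
    using b r_block by (simp_all add: block_source_even block_source_odd)
  show ?thesis
  proof
    assume "b \<in> S"
    then have "J + 2 * b \<notin> set x"
      using nonzero[of "J + 2 * b"] even by auto
    then show "J + 2 * b + 1 \<in> set x"
      using hit by auto
  next
    assume "J + 2 * b + 1 \<in> set x"
    then show "b \<in> S"
      using nonzero[of "J + 2 * b + 1"] odd by (auto split: if_splits)
  qed
qed

lemma card_block_sources_positive:
  fixes r :: "nat \<Rightarrow> real" and x :: "nat list"
  assumes r_block: "\<And>j. J \<le> j \<Longrightarrow> j < J + 2 * N \<Longrightarrow> r j = 0"
  defines "H \<equiv> {b\<in>{..<N}. set x \<inter> {J + 2 * b, J + 2 * b + 1} \<noteq> {}}"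
  shows "real (card {S\<in>Pow {..<N}. 0 < iid_prob (block_source r J N q S) x}) * 2 ^ card H
           \<le> real (card (Pow {..<N}))"
proof -
  define R where "R = {b\<in>H. J + 2 * b + 1 \<in> set x}"
  have "{S\<in>Pow {..<N}. 0 < iid_prob (block_source r J N q S) x} \<subseteq> {S. S \<subseteq> {..<N} \<and> S \<inter> H = R}"
    using block_source_positive_on_block[OF r_block] by (auto simp: H_def R_def)
  then have "card {S\<in>Pow {..<N}. 0 < iid_prob (block_source r J N q S) x}
      \<le> card {S. S \<subseteq> {..<N} \<and> S \<inter> H = R}"
    by (intro card_mono) auto
  also have "\<dots> \<le> 2 ^ (card {..<N} - card H)"
    by (rule card_subsets_with_trace_le) (auto simp: H_def)
  finally have "card {S\<in>Pow {..<N}. 0 < iid_prob (block_source r J N q S) x} \<le> 2 ^ (N - card H)"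
    by simp
  moreover have "card H \<le> N"
    using card_mono[of "{..<N}" H] by (auto simp: H_def)
  ultimately have "real (card {S\<in>Pow {..<N}. 0 < iid_prob (block_source r J N q S) x}) * 2 ^ card H
      \<le> 2 ^ (N - card H) * 2 ^ card H"
    by (intro mult_right_mono) (simp_all add: of_nat_le_iff[symmetric])
  also have "\<dots> = real (card (Pow {..<N}))"
    using \<open>card H \<le> N\<close> by (simp add: card_Pow power_add[symmetric])
  finally show ?thesis .
qed

lemma minimax_redundancy_ge_block_sources:
  fixes f r :: "nat \<Rightarrow> real"
  assumes r: "\<And>j. 0 \<le> r j" "(\<lambda>i. r (Suc i)) sums (1 - real N * q)"
    and r_block: "\<And>j. J \<le> j \<Longrightarrow> j < J + 2 * N \<Longrightarrow> r j = 0"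
    and r_le: "\<And>j. 1 \<le> j \<Longrightarrow> r j \<le> f j"
    and q: "0 \<le> q" and q_le: "\<And>j. J \<le> j \<Longrightarrow> j < J + 2 * N \<Longrightarrow> q \<le> f j"
    and J: "1 \<le> J"
  shows "ereal (real N * (1 - (1 - q) ^ n)) \<le> minimax_redundancy f n"
  unfolding minimax_redundancy_def
proof (rule INF_greatest, clarify)
  fix Q :: "nat list \<Rightarrow> real"
  assume Q: "\<forall>x\<in>words n. 0 \<le> Q x" "(Q has_sum 1) (words n)"
  define src where "src S = block_source r J N q S" for S
  define hits where "hits b x \<longleftrightarrow> set x \<inter> {J + 2 * b, J + 2 * b + 1} \<noteq> {}" for b x
  have src_nonneg: "0 \<le> src S j" for S j
    using r(1) q by (simp add: src_def block_source_def)
  have src_sums: "(\<lambda>i. src S (Suc i)) sums 1" for S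
    using block_source_sums[of r "1 - real N * q" J N q S] r(2) r_block J by (simp add: src_def)
  have src_env: "src S \<in> envelope_class f" for S
  proof -
    have "src S j \<le> f j" if "1 \<le> j" for j
      using r_le[OF that] r_block q_le by (auto simp: src_def block_source_def)
    then show ?thesis
      using src_nonneg src_sums by (simp add: envelope_class_def)
  qed
  have P: "(iid_prob (src S) has_sum 1) (words n)" for S
    using has_sum_iid_prob[of "src S" 1 n] src_nonneg src_sums by simp
  have P_nonneg: "0 \<le> iid_prob (src S) x" for S x
    unfolding iid_prob_def using src_nonneg by (intro prod_list_nonneg) auto
  have miss: "((\<lambda>x. if hits b x then 0 else iid_prob (src S) x) has_sum (1 - q) ^ n) (words n)"
    if "b \<in> {..<N}" for b S
  proof -
    have "sum (src S) {J + 2 * b, J + 2 * b + 1} = q"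
      using that r_block by (simp add: src_def block_source_even block_source_odd)
    then show ?thesis
      using has_sum_iid_prob_avoiding[of "src S" "{J + 2 * b, J + 2 * b + 1}" n] src_nonneg src_sums J
      by (simp add: hits_def)
  qed
  have "\<exists>S\<in>Pow {..<N}. ereal (real N * (1 - (1 - q) ^ n)) \<le> kl_div (words n) (iid_prob (src S)) Q"
  proof (rule kl_div_ge_by_counting)
    show "((\<lambda>x. iid_prob (src S) x * real (card {b\<in>{..<N}. hits b x})) has_sum
        real N * (1 - (1 - q) ^ n)) (words n)" for S
      using has_sum_card_events[OF finite_lessThan P miss] by simp
    show "real (card {S\<in>Pow {..<N}. 0 < iid_prob (src S) x}) * 2 ^ card {b\<in>{..<N}. hits b x}
        \<le> real (card (Pow {..<N::nat}))" for x
      unfolding src_def hits_def by (rule card_block_sources_positive[OF r_block])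
  qed (use P P_nonneg Q in auto)
  then show "ereal (real N * (1 - (1 - q) ^ n))
      \<le> (SUP p\<in>envelope_class f. kl_div (words n) (iid_prob p) Q)"
    using src_env by (auto intro: SUP_upper2)
qed

section \<open>Tail contraction in the Frechet domain\<close>

lemma pow_le_exp_neg_mult:
  fixes y :: real
  assumes "y \<le> 1"
  shows "(1 - y) ^ n \<le> exp (- (real n * y))"
proof -
  have "(1 - y) ^ n \<le> exp (- y) ^ n"
    using assms exp_ge_add_one_self[of "-y"] by (intro power_mono) auto
  then show ?thesis
    by (simp add: exp_of_nat_mult[symmetric])
qed

lemma gev_limit_scale_le:
  fixes Fs :: "real \<Rightarrow> real"
  assumes F0: "\<And>x. x < 0 \<Longrightarrow> Fs x = 0" and \<gamma>: "0 < \<gamma>"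
    and conv: "\<And>x. 0 < 1 + \<gamma> * x \<Longrightarrow> (\<lambda>n. Fs (A n * x + u n) ^ n) \<longlonglongrightarrow> gev \<gamma> x"
  shows "eventually (\<lambda>n. A n \<le> 2 * \<gamma> * u n) sequentially"
proof -
  have "(\<lambda>n. Fs (A n * (- 1 / (2 * \<gamma>)) + u n) ^ n) \<longlonglongrightarrow> gev \<gamma> (- 1 / (2 * \<gamma>))"
    using conv[of "- 1 / (2 * \<gamma>)"] \<gamma> by simp
  moreover have "0 < gev \<gamma> (- 1 / (2 * \<gamma>))"
    by (simp add: gev_def)
  ultimately have "eventually (\<lambda>n. 0 < Fs (A n * (- 1 / (2 * \<gamma>)) + u n) ^ n) sequentially"
    by (rule order_tendstoD(1))
  with eventually_gt_at_top[of 0] show ?thesis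
  proof eventually_elim
    case (elim n)
    then have "Fs (A n * (- 1 / (2 * \<gamma>)) + u n) \<noteq> 0"
      by (metis less_irrefl power_0_left)
    then have "0 \<le> A n * (- 1 / (2 * \<gamma>)) + u n"
      using F0 not_le by blast
    then show ?case
      using \<gamma> by (simp add: field_simps)
  qed
qed

lemma gev_limit_quantile_tail:
  fixes Fs :: "real \<Rightarrow> real"
  assumes F_nonneg: "\<And>x. 0 \<le> Fs x" and \<gamma>: "0 < \<gamma>"
    and conv: "(\<lambda>n. Fs (u n) ^ n) \<longlonglongrightarrow> gev \<gamma> 0"
  shows "eventually (\<lambda>n. 2 / 5 < real n * (1 - Fs (u n))) sequentially"
proof -
  have "gev \<gamma> 0 < 3 / 5"
    using \<gamma> exp_ge_add_one_self[of 1] by (simp add: gev_def exp_minus field_simps)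
  with conv have "eventually (\<lambda>n. Fs (u n) ^ n < 3 / 5) sequentially"
    by (rule order_tendstoD(2))
  then show ?thesis
  proof eventually_elim
    case (elim n)
    have "1 - real n * (1 - Fs (u n)) \<le> (1 - (1 - Fs (u n))) ^ n"
      using Bernoulli_inequality[of "- (1 - Fs (u n))" n] F_nonneg[of "u n"]
      by (simp add: algebra_simps)
    then show ?case
      using elim by simp
  qed
qed

lemma gev_limit_shifted_tail:
  fixes Fs :: "real \<Rightarrow> real"
  assumes F_nonneg: "\<And>x. 0 \<le> Fs x" and \<gamma>: "0 < \<gamma>" and x: "1 + \<gamma> * x = 64 powr \<gamma>"
    and conv: "(\<lambda>n. Fs (A n * x + u n) ^ n) \<longlonglongrightarrow> gev \<gamma> x"
  shows "eventually (\<lambda>n. real n * (1 - Fs (A n * x + u n)) < 1 / 32) sequentially"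
proof -
  have "gev \<gamma> x = exp (- (1 / 64))"
    using \<gamma> x by (simp add: gev_def powr_powr powr_minus_divide)
  then have "exp (- (1 / 32)) < gev \<gamma> x"
    by simp
  with conv have "eventually (\<lambda>n. exp (- (1 / 32)) < Fs (A n * x + u n) ^ n) sequentially"
    by (simp add: order_tendstoD(1))
  then show ?thesis
  proof eventually_elim
    case (elim n)
    have "Fs (A n * x + u n) ^ n \<le> exp (- (real n * (1 - Fs (A n * x + u n))))"
      using pow_le_exp_neg_mult[of "1 - Fs (A n * x + u n)" n] F_nonneg by simp
    with elim have "exp (- (1 / 32)) < exp (- (real n * (1 - Fs (A n * x + u n))))"
      by linarith
    then show ?case
      by simp
  qed
qed

text \<open>Evaluate the convergence in the definition of \<open>in_MDA\<close> at three points: \<open>x = 0\<close> gives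
  \<open>n (1 - Fs (u n)) \<approx> 1\<close>; \<open>x = - 1 / (2 \<gamma>)\<close> lies in the support of the limit law, which
  forces \<open>u n - A n / (2 \<gamma>) \<ge> 0\<close> since \<open>Fs\<close> vanishes on the negative axis; and the \<open>x\<close> with
  \<open>(1 + \<gamma> x) powr (1 / \<gamma>) = 64\<close> gives \<open>n (1 - Fs (A n x + u n)) \<approx> 1 / 64\<close>.\<close>
lemma in_MDA_Frechet_quantile_bounds:
  fixes Fs :: "real \<Rightarrow> real"
  assumes F0: "\<And>x. x < 0 \<Longrightarrow> Fs x = 0" and F_nonneg: "\<And>x. 0 \<le> Fs x"
    and \<gamma>: "0 < \<gamma>" and mda: "in_MDA Fs \<gamma>"
  obtains c a u where "0 \<le> c"
    "eventually (\<lambda>n. a n \<le> c * u n \<and> 2 / 5 < real n * (1 - Fs (u n))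
        \<and> real n * (1 - Fs (a n + u n)) < 1 / 32) sequentially"
proof -
  define u where "u n = tail_quantile Fs (real n)" for n :: nat
  obtain A where conv: "\<And>x. 0 < 1 + \<gamma> * x \<Longrightarrow> (\<lambda>n. Fs (A n * x + u n) ^ n) \<longlonglongrightarrow> gev \<gamma> x"
    using mda unfolding in_MDA_def u_def by blast
  define x where "x = (64 powr \<gamma> - 1) / \<gamma>"
  have x: "0 \<le> x" "1 + \<gamma> * x = 64 powr \<gamma>"
    using \<gamma> ge_one_powr_ge_zero[of 64 \<gamma>] by (auto simp: x_def)
  have "0 \<le> 2 * \<gamma> * x"
    using \<gamma> x(1) by simp
  have "eventually (\<lambda>n. A n \<le> 2 * \<gamma> * u n) sequentially"
    using F0 \<gamma> conv by (rule gev_limit_scale_le[where Fs = Fs and A = A and u = u])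
  moreover have "eventually (\<lambda>n. 2 / 5 < real n * (1 - Fs (u n))) sequentially"
    using gev_limit_quantile_tail[OF F_nonneg \<gamma>] conv[of 0] by simp
  moreover have "eventually (\<lambda>n. real n * (1 - Fs (A n * x + u n)) < 1 / 32) sequentially"
    using gev_limit_shifted_tail[OF F_nonneg \<gamma> x(2) conv] x(2) by simp
  ultimately have "eventually (\<lambda>n. A n * x \<le> 2 * \<gamma> * x * u n \<and> 2 / 5 < real n * (1 - Fs (u n))
      \<and> real n * (1 - Fs (A n * x + u n)) < 1 / 32) sequentially"
  proof eventually_elim
    case (elim n)
    have "A n * x \<le> (2 * \<gamma> * u n) * x"
      using elim x(1) by (intro mult_right_mono) auto
    then show ?case
      using elim by (simp add: mult_ac)
  qed
  with \<open>0 \<le> 2 * \<gamma> * x\<close> show ?thesis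
    by (rule that)
qed

lemma obtain_nat_inverse_bracket:
  fixes e :: real
  assumes e: "0 < e" "e < 1 / (4 * (real n0 + 1))"
  obtains n where "n0 < n" "1 / (8 * real n) < e" "e \<le> 1 / (4 * real n)"
proof
  define n where "n = nat \<lfloor>1 / (4 * e)\<rfloor>"
  have "real n0 + 1 < 1 / (4 * e)"
    using e by (simp add: field_simps)
  then have "real_of_int (int n0 + 1) \<le> of_int \<lfloor>1 / (4 * e)\<rfloor>"
    by (simp only: of_int_le_iff le_floor_iff)
  moreover have "real n = of_int \<lfloor>1 / (4 * e)\<rfloor>"
    using e(1) by (simp add: n_def)
  ultimately have n: "real n \<le> 1 / (4 * e)" "1 / (4 * e) < real n + 1" "real n0 + 1 \<le> real n"
    by linarith+
  then show "n0 < n"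
    by linarith
  show "e \<le> 1 / (4 * real n)"
    using n e by (simp add: field_simps)
  have "1 < 4 * e * real n + 4 * e"
    using n(2) e by (simp add: field_simps)
  moreover have "4 * e \<le> 4 * e * real n"
    using e(1) n(3) by simp
  ultimately show "1 / (8 * real n) < e"
    using n(3) by (simp add: field_simps)
qed

text \<open>Given \<open>t\<close>, take \<open>n \<approx> 1 / (4 (1 - Fs t))\<close>: the quantile bounds place \<open>u n\<close> below \<open>t\<close>
  and \<open>a n + u n\<close> below \<open>(1 + c) t\<close>, where the tail is below \<open>1 / (32 n) < (1 - Fs t) / 4\<close>.\<close>
lemma tail_ratio_from_quantile_bounds:
  fixes Fs :: "real \<Rightarrow> real"
  assumes mono: "mono Fs" and less_1: "\<And>t. Fs t < 1" and lim: "(Fs \<longlongrightarrow> 1) at_top"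
    and c: "0 \<le> c"
    and bounds: "eventually (\<lambda>n. a n \<le> c * u n \<and> 2 / 5 < real n * (1 - Fs (u n))
        \<and> real n * (1 - Fs (a n + u n)) < 1 / 32) sequentially"
  shows "eventually (\<lambda>t. 1 - Fs ((1 + c) * t) \<le> (1 - Fs t) / 4) at_top"
proof -
  obtain n0 where n0: "\<And>n. n \<ge> n0 \<Longrightarrow> a n \<le> c * u n \<and> 2 / 5 < real n * (1 - Fs (u n))
      \<and> real n * (1 - Fs (a n + u n)) < 1 / 32"
    using bounds by (auto simp: eventually_sequentially)
  have "eventually (\<lambda>t. 1 - 1 / (4 * (real n0 + 1)) < Fs t) at_top"
    using lim by (rule order_tendstoD(1)) simp
  then show ?thesis
  proof (rule eventually_mono)
    fix t assume t: "1 - 1 / (4 * (real n0 + 1)) < Fs t"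
    define e where "e = 1 - Fs t"
    have "0 < e" "e < 1 / (4 * (real n0 + 1))"
      using less_1[of t] t by (auto simp: e_def)
    then obtain n where "n0 < n" "1 / (8 * real n) < e" "e \<le> 1 / (4 * real n)"
      by (rule obtain_nat_inverse_bracket)
    then have "n0 \<le> n" "0 < real n"
      by auto
    note bounds_n = n0[OF \<open>n0 \<le> n\<close>]
    have "e * real n \<le> 1 / 4"
      using \<open>e \<le> 1 / (4 * real n)\<close> \<open>0 < real n\<close> by (simp add: field_simps)
    then have "e * real n < (1 - Fs (u n)) * real n"
      using bounds_n by (simp add: mult.commute)
    then have "e < 1 - Fs (u n)"
      using \<open>0 < real n\<close> by simp
    then have "u n < t"
      using mono unfolding e_def mono_def by (meson diff_left_mono not_le)
    have "a n + u n \<le> (1 + c) * t"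
    proof -
      have "a n + u n \<le> (1 + c) * u n"
        using bounds_n by (simp add: algebra_simps)
      also have "\<dots> \<le> (1 + c) * t"
        using \<open>u n < t\<close> c by simp
      finally show ?thesis .
    qed
    then have "1 - Fs ((1 + c) * t) \<le> 1 - Fs (a n + u n)"
      using mono by (simp add: mono_def)
    also have "\<dots> < 1 / (32 * real n)"
      using bounds_n \<open>0 < real n\<close> by (simp add: field_simps)
    also have "\<dots> < e / 4"
      using \<open>1 / (8 * real n) < e\<close> \<open>0 < real n\<close> by (simp add: field_simps)
    finally show "1 - Fs ((1 + c) * t) \<le> (1 - Fs t) / 4"
      by (simp add: e_def)
  qed
qed

lemma in_MDA_Frechet_tail_ratio:
  fixes Fs :: "real \<Rightarrow> real"
  assumes F0: "\<And>x. x < 0 \<Longrightarrow> Fs x = 0" and F_nonneg: "\<And>x. 0 \<le> Fs x" and mono: "mono Fs"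
    and less_1: "\<And>t. Fs t < 1" and lim: "(Fs \<longlongrightarrow> 1) at_top"
    and \<gamma>: "0 < \<gamma>" and mda: "in_MDA Fs \<gamma>"
  obtains l where "1 \<le> l" "eventually (\<lambda>t. 1 - Fs (l * t) \<le> (1 - Fs t) / 4) at_top"
proof -
  obtain c a u where "0 \<le> c" and "eventually (\<lambda>n. a n \<le> c * u n \<and> 2 / 5 < real n * (1 - Fs (u n))
      \<and> real n * (1 - Fs (a n + u n)) < 1 / 32) sequentially"
    using in_MDA_Frechet_quantile_bounds[OF F0 F_nonneg \<gamma> mda] by blast
  from tail_ratio_from_quantile_bounds[OF mono less_1 lim this] show ?thesis
    using that[of "1 + c"] \<open>0 \<le> c\<close> by simp
qed

definition envelope_tail :: "(nat \<Rightarrow> real) \<Rightarrow> nat \<Rightarrow> real" where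
  "envelope_tail f k = (\<Sum>i. f (Suc (i + k)))"

lemma envelope_cdf_eq:
  "envelope_cdf f k = (if envelope_tail f k < 1 then 1 - envelope_tail f k else 0)"
  by (simp add: envelope_cdf_def envelope_tail_def Let_def)

lemma is_envelopeD:
  assumes "is_envelope f"
  shows "\<And>j. 1 \<le> j \<Longrightarrow> 0 < f j" "summable (\<lambda>i. f (Suc i))" "1 < (\<Sum>i. f (Suc i))"
  using assms by (auto simp: is_envelope_def)

lemma is_envelope_partial_sum_ge_1:
  assumes "is_envelope f"
  obtains J0 where "1 \<le> (\<Sum>i<J0. f (Suc i))"
proof -
  have "(\<lambda>k. \<Sum>i<k. f (Suc i)) \<longlonglongrightarrow> (\<Sum>i. f (Suc i))"
    using is_envelopeD(2)[OF assms] by (rule summable_LIMSEQ)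
  from order_tendstoD(1)[OF this is_envelopeD(3)[OF assms]] show ?thesis
    using that by (metis eventually_sequentially less_imp_le order_refl)
qed

lemma envelope_tail_pos:
  assumes "is_envelope f"
  shows "0 < envelope_tail f k"
  unfolding envelope_tail_def using is_envelopeD[OF assms]
  by (intro suminf_pos summable_ignore_initial_segment[of "\<lambda>i. f (Suc i)", simplified]) auto

lemma envelope_tail_split:
  assumes "summable (\<lambda>i. f (Suc i))" "k \<le> l"
  shows "envelope_tail f k = (\<Sum>i<l - k. f (Suc (i + k))) + envelope_tail f l"
proof -
  have "summable (\<lambda>i. f (Suc (i + k)))"
    using summable_ignore_initial_segment[OF assms(1), of k] by simp
  from suminf_split_initial_segment[OF this, of "l - k"] assms(2) show ?thesis
    by (simp add: envelope_tail_def algebra_simps)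
qed

lemma le_of_nonincreasing_from:
  fixes f :: "nat \<Rightarrow> 'a::preorder"
  assumes "\<And>j. J \<le> j \<Longrightarrow> f (Suc j) \<le> f j" "J \<le> j" "j \<le> k"
  shows "f k \<le> f j"
  using assms(3)
proof (induction k rule: dec_induct)
  case (step k)
  then show ?case
    using assms(1)[of k] assms(2) order_trans by auto
qed simp

lemma envelope_tail_diff_le:
  assumes "summable (\<lambda>i. f (Suc i))" and mono_f: "\<And>j. J \<le> j \<Longrightarrow> f (Suc j) \<le> f j"
    and "J \<le> Suc k" "k \<le> l"
  shows "envelope_tail f k - envelope_tail f l \<le> real (l - k) * f (Suc k)"
proof -
  have "(\<Sum>i<l - k. f (Suc (i + k))) \<le> real (card {..<l - k}) * f (Suc k)"
    using assms(3) le_of_nonincreasing_from[of J f, OF mono_f] by (intro sum_bounded_above) auto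
  then show ?thesis
    using envelope_tail_split[OF assms(1,4)] by simp
qed

lemma smoothed_envelope_cdfD:
  assumes "smoothed_envelope_cdf f Fs"
  shows "\<And>x. x < 0 \<Longrightarrow> Fs x = 0" "mono Fs" "(Fs \<longlongrightarrow> 1) at_top"
    "\<And>k. Fs (real k) = envelope_cdf f k" "continuous_on {0..} Fs"
proof -
  obtain F' where "\<And>x. x \<ge> 0 \<Longrightarrow> (Fs has_real_derivative F' x) (at x within {0..})"
    using assms unfolding smoothed_envelope_cdf_def by blast
  then show "continuous_on {0..} Fs"
    by (intro DERIV_continuous_on) auto
qed (use assms in \<open>auto simp: smoothed_envelope_cdf_def\<close>)

lemma smoothed_envelope_cdf_bounds:
  assumes f: "is_envelope f" and Fs: "smoothed_envelope_cdf f Fs"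
  shows "0 \<le> Fs x" "Fs x < 1" "Fs 0 = 0"
proof -
  note F = smoothed_envelope_cdfD[OF Fs]
  have "Fs (min x (-1)) \<le> Fs x"
    using F(2) by (simp add: mono_def)
  then show "0 \<le> Fs x"
    using F(1)[of "min x (-1)"] by simp
  have "x \<le> real (nat \<lceil>x\<rceil>)"
    by linarith
  then have "Fs x \<le> Fs (real (nat \<lceil>x\<rceil>))"
    using F(2) by (simp add: mono_def)
  also have "\<dots> < 1"
    using F(4) envelope_tail_pos[OF f] by (simp add: envelope_cdf_eq)
  finally show "Fs x < 1" .
  have "envelope_tail f 0 = (\<Sum>i. f (Suc i))"
    by (simp add: envelope_tail_def)
  then show "Fs 0 = 0"
    using F(4)[of 0] is_envelopeD(3)[OF f] by (simp add: envelope_cdf_eq)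
qed

section \<open>Redundancy at the scale \<open>m_n\<close>\<close>

lemma m_seq_eq:
  fixes Fs :: "real \<Rightarrow> real"
  assumes F0: "Fs 0 = 0" and mono: "mono Fs" and bounds: "\<And>x. 0 \<le> Fs x" "\<And>x. Fs x \<le> 1"
    and cont: "continuous_on {0..} Fs" and n: "0 < n"
  shows "1 - Fs (m_seq Fs n) = m_seq Fs n / real n" "0 \<le> m_seq Fs n" "m_seq Fs n \<le> real n"
proof -
  define h where "h x = 1 - Fs x - x / real n" for x
  have "continuous_on {0..real n} h"
    unfolding h_def using n by (intro continuous_intros continuous_on_subset[OF cont]) auto
  moreover have "h (real n) \<le> 0" "0 \<le> h 0"
    using bounds[of "real n"] n F0 by (auto simp: h_def)
  ultimately obtain x where "0 \<le> x" "x \<le> real n" "h x = 0"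
    using IVT2'[of h "real n" 0 0] by auto
  then have x: "0 \<le> x" "x \<le> real n" "1 - Fs x = x / real n"
    by (simp_all add: h_def)
  have "y = x" if "1 - Fs y = y / real n" for y
  proof -
    have "0 \<le> (y - x) * (Fs y - Fs x)"
      using mono by (cases "x \<le> y") (auto simp: mono_def mult_nonneg_nonneg mult_nonpos_nonpos)
    also have "Fs y - Fs x = (x - y) / real n"
      using that x(3) by (simp add: diff_divide_distrib)
    also have "(y - x) * ((x - y) / real n) = - ((y - x) ^ 2 / real n)"
      using n by (simp add: power2_eq_square field_simps)
    finally show ?thesis
      using n by (simp add: divide_le_0_iff)
  qed
  then have "m_seq Fs n = x"
    unfolding m_seq_def using x(3) by (intro the_equality)
  then show "1 - Fs (m_seq Fs n) = m_seq Fs n / real n" "0 \<le> m_seq Fs n" "m_seq Fs n \<le> real n"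
    using x by simp_all
qed

lemma m_seq_eventually_ge:
  fixes Fs :: "real \<Rightarrow> real"
  assumes F0: "Fs 0 = 0" and mono: "mono Fs" and bounds: "\<And>x. 0 \<le> Fs x" "\<And>x. Fs x \<le> 1"
    and cont: "continuous_on {0..} Fs" and B: "Fs B < 1"
  shows "eventually (\<lambda>n. B \<le> m_seq Fs n) sequentially"
proof -
  have "eventually (\<lambda>n. max 0 (B / (1 - Fs B)) < real n) sequentially"
    using filterlim_real_sequentially unfolding filterlim_at_top_dense by blast
  then show ?thesis
  proof (rule eventually_mono)
    fix n :: nat assume n: "max 0 (B / (1 - Fs B)) < real n"
    then have "0 < n" "B < (1 - Fs B) * real n"
      using B by (auto simp: field_simps)
    show "B \<le> m_seq Fs n"
    proof (rule ccontr)
      assume "\<not> B \<le> m_seq Fs n"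
      then have "Fs (m_seq Fs n) \<le> Fs B"
        using mono by (simp add: mono_def)
      then have "1 - Fs B \<le> m_seq Fs n / real n"
        using m_seq_eq(1)[OF F0 mono bounds cont \<open>0 < n\<close>] by simp
      then have "(1 - Fs B) * real n \<le> m_seq Fs n"
        using \<open>0 < n\<close> by (simp add: field_simps)
      then show False
        using \<open>\<not> B \<le> m_seq Fs n\<close> \<open>B < (1 - Fs B) * real n\<close> by simp
    qed
  qed
qed

text \<open>Between \<open>\<lfloor>m\<rfloor>\<close> and \<open>\<lceil>l m\<rceil>\<close> the envelope carries mass at least \<open>3 m / (4 n)\<close> spread over
  at most \<open>2 l m\<close> symbols, and monotonicity puts the largest of them at \<open>\<lfloor>m\<rfloor> + 1\<close>.\<close>
lemma envelope_ge_at_m_seq: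
  fixes f :: "nat \<Rightarrow> real" and Fs :: "real \<Rightarrow> real"
  assumes f: "is_envelope f" and Fs: "smoothed_envelope_cdf f Fs"
    and mono_f: "\<And>j. J \<le> j \<Longrightarrow> f (Suc j) \<le> f j" and J: "real J \<le> m"
    and l: "1 \<le> l" and ratio: "1 - Fs (l * m) \<le> (1 - Fs m) / 4"
    and m: "1 - Fs m = m / real n" "2 \<le> m" "m \<le> real n"
  shows "1 / (4 * l * real n) \<le> f (Suc (nat \<lfloor>m\<rfloor>))"
proof -
  note mono = smoothed_envelope_cdfD(2)[OF Fs] and cdf = smoothed_envelope_cdfD(4)[OF Fs]
  define K where "K = nat \<lfloor>m\<rfloor>"
  define L where "L = nat \<lceil>l * m\<rceil>"
  have n: "0 < real n"
    using m by linarith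
  have K: "real K \<le> m" "m < real K + 1"
    using m by (auto simp: K_def)
  have L: "l * m \<le> real L" "real L < l * m + 1"
    using m l by (auto simp: L_def) linarith+
  have "m \<le> l * m"
    using l m by simp
  then have "K \<le> L" "J \<le> Suc K"
    using K L J by linarith+
  have "Fs (l * m) \<le> Fs (real L)"
    using mono L(1) by (simp add: mono_def)
  then have "1 - Fs (real L) \<le> m / (4 * real n)"
    using ratio m(1) by simp
  moreover have "m / (4 * real n) \<le> 1 / 4"
    using m n by (simp add: field_simps)
  ultimately have tail_L: "envelope_tail f L \<le> m / (4 * real n)"
    using cdf[of L] by (auto simp: envelope_cdf_eq split: if_splits)
  have "Fs (real K) \<le> Fs m"
    using mono K(1) by (simp add: mono_def)
  then have "m / real n \<le> 1 - Fs (real K)"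
    using m(1) by simp
  also have "\<dots> \<le> envelope_tail f K"
    using cdf[of K] smoothed_envelope_cdf_bounds(2)[OF f Fs, of m]
    by (auto simp: envelope_cdf_eq split: if_splits)
  finally have "3 * m / (4 * real n) \<le> real (L - K) * f (Suc K)"
    using envelope_tail_diff_le[OF is_envelopeD(2)[OF f] mono_f \<open>J \<le> Suc K\<close> \<open>K \<le> L\<close>] tail_L
    by (simp add: field_simps)
  also have "\<dots> \<le> 2 * l * m * f (Suc K)"
    using K L m \<open>K \<le> L\<close> is_envelopeD(1)[OF f, of "Suc K"]
    by (intro mult_right_mono) (simp_all add: of_nat_diff)
  finally have "3 / (8 * l * real n) \<le> f (Suc K)"
    using l m n by (simp add: field_simps)
  moreover have "1 / (4 * l * real n) \<le> 3 / (8 * l * real n)"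
    using l n by (simp add: field_simps)
  ultimately show ?thesis
    by (simp add: K_def)
qed

lemma envelope_head_source:
  fixes f :: "nat \<Rightarrow> real"
  assumes f_pos: "\<And>j. 1 \<le> j \<Longrightarrow> 0 < f j" and head: "1 \<le> (\<Sum>i<J0. f (Suc i))"
    and s: "0 \<le> s" "s \<le> 1"
  obtains r where "\<And>j. 0 \<le> r j" "(\<lambda>i. r (Suc i)) sums s" "\<And>j. J0 < j \<Longrightarrow> r j = 0"
    "\<And>j. 1 \<le> j \<Longrightarrow> r j \<le> f j"
proof
  define S0 where "S0 = (\<Sum>i<J0. f (Suc i))"
  define r where "r j = (if 1 \<le> j \<and> j \<le> J0 then s / S0 * f j else 0)" for j
  have coeff: "0 \<le> s / S0" "s / S0 \<le> 1"
    using head s by (simp_all add: S0_def)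
  show "0 \<le> r j" for j
  proof (cases "1 \<le> j \<and> j \<le> J0")
    case True
    then show ?thesis
      using mult_nonneg_nonneg[OF coeff(1) less_imp_le[OF f_pos[of j]]] by (simp add: r_def)
  qed (auto simp: r_def)
  have "(\<lambda>i. r (Suc i)) sums (\<Sum>i<J0. r (Suc i))"
    by (rule sums_finite) (auto simp: r_def)
  moreover have "(\<Sum>i<J0. r (Suc i)) = s / S0 * S0"
    by (simp add: r_def S0_def sum_distrib_left)
  ultimately show "(\<lambda>i. r (Suc i)) sums s"
    using head by (simp add: S0_def)
  show "r j = 0" if "J0 < j" for j
    using that by (simp add: r_def)
  show "r j \<le> f j" if "1 \<le> j" for j
    using mult_left_le_one_le[OF less_imp_le[OF f_pos[OF that]] coeff] f_pos[OF that]
    by (simp add: r_def)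
qed

text \<open>The \<open>N \<approx> m / 2\<close> blocks sit in \<open>[J, \<lfloor>m\<rfloor> + 1]\<close>, where the envelope is at least
  \<open>q = 1 / (4 l n)\<close>; the head \<open>{1..J0}\<close> absorbs the remaining mass \<open>1 - N q\<close>.\<close>
lemma minimax_redundancy_ge_m_seq:
  fixes f :: "nat \<Rightarrow> real" and Fs :: "real \<Rightarrow> real"
  assumes f: "is_envelope f" and Fs: "smoothed_envelope_cdf f Fs"
    and mono_f: "\<And>j. J \<le> j \<Longrightarrow> f (Suc j) \<le> f j"
    and head: "1 \<le> (\<Sum>i<J0. f (Suc i))" "J0 < J"
    and l: "1 \<le> l" and ratio: "1 - Fs (l * m) \<le> (1 - Fs m) / 4"
    and m: "1 - Fs m = m / real n" "2 * real J + 4 \<le> m" "m \<le> real n"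
  shows "ereal ((1 - exp (- (1 / (4 * l)))) / 4 * m) \<le> minimax_redundancy f n"
proof -
  define K where "K = nat \<lfloor>m\<rfloor>"
  define q where "q = 1 / (4 * l * real n)"
  define N where "N = (K + 2 - J) div 2"
  have K: "real K \<le> m" "m < real K + 1"
    using m by (auto simp: K_def)
  have "1 \<le> l * real n"
    using mult_mono[of 1 l 1 "real n"] l m by linarith
  then have q: "0 < q" "q \<le> 1" "real n * q = 1 / (4 * l)"
    using l m by (auto simp: q_def)
  have "real N * q \<le> real n * q"
    using K m q by (intro mult_right_mono) (auto simp: N_def)
  also have "\<dots> \<le> 1"
    unfolding q(3) using l by simp
  finally obtain r where r: "\<And>j. 0 \<le> r j" "(\<lambda>i. r (Suc i)) sums (1 - real N * q)"
    "\<And>j. J0 < j \<Longrightarrow> r j = 0" "\<And>j. 1 \<le> j \<Longrightarrow> r j \<le> f j"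
    using envelope_head_source[OF is_envelopeD(1)[OF f] head(1), of "1 - real N * q"] q(1)
    by auto
  have q_le: "q \<le> f j" if "J \<le> j" "j < J + 2 * N" for j
  proof -
    have "q \<le> f (Suc K)"
      using envelope_ge_at_m_seq[OF f Fs mono_f _ l ratio m(1) _ m(3)] m(2)
      by (simp add: q_def K_def)
    also have "f (Suc K) \<le> f j"
      using that by (intro le_of_nonincreasing_from[of J f, OF mono_f]) (auto simp: N_def)
    finally show ?thesis .
  qed
  have redundancy: "ereal (real N * (1 - (1 - q) ^ n)) \<le> minimax_redundancy f n"
    using head(2) q(1) by (intro minimax_redundancy_ge_block_sources[OF r(1,2) _ r(4) _ q_le] r(3)) auto
  have "(1 - q) ^ n \<le> exp (- (1 / (4 * l)))"
    using pow_le_exp_neg_mult[OF q(2), of n] q(3) by simp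
  moreover have "m / 4 \<le> real N"
    using K m by (simp add: N_def)
  moreover have "0 \<le> 1 - exp (- (1 / (4 * l)))"
    using l by simp
  ultimately have "m / 4 * (1 - exp (- (1 / (4 * l)))) \<le> real N * (1 - (1 - q) ^ n)"
    by (intro mult_mono) auto
  then show ?thesis
    by (intro order_trans[OF _ redundancy]) (simp add: mult.commute)
qed

lemma smoothed_envelope_tail_ratio:
  assumes f: "is_envelope f" and Fs: "smoothed_envelope_cdf f Fs"
    and \<gamma>: "0 < \<gamma>" and mda: "in_MDA Fs \<gamma>"
  obtains l T where "1 \<le> l" "\<And>t. T \<le> t \<Longrightarrow> 1 - Fs (l * t) \<le> (1 - Fs t) / 4"
proof -
  note F = smoothed_envelope_cdfD[OF Fs] smoothed_envelope_cdf_bounds[OF f Fs]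
  obtain l where "1 \<le> l" "eventually (\<lambda>t. 1 - Fs (l * t) \<le> (1 - Fs t) / 4) at_top"
    using in_MDA_Frechet_tail_ratio[OF F(1,6,2,7,3) \<gamma> mda] by blast
  then show ?thesis
    using that by (auto simp: eventually_at_top_linorder)
qed

lemma smoothed_envelope_m_seq_eventually:
  assumes f: "is_envelope f" and Fs: "smoothed_envelope_cdf f Fs"
  shows "eventually (\<lambda>n. B \<le> m_seq Fs n \<and> 1 - Fs (m_seq Fs n) = m_seq Fs n / real n
    \<and> m_seq Fs n \<le> real n) sequentially"
proof -
  note F = smoothed_envelope_cdfD[OF Fs] smoothed_envelope_cdf_bounds[OF f Fs]
  have F_le_1: "Fs x \<le> 1" for x
    using F(7)[of x] by simp
  show ?thesis
    using m_seq_eventually_ge[OF F(8,2,6) F_le_1 F(5) F(7)[of B]] eventually_gt_at_top[of 0]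
    by eventually_elim (simp add: m_seq_eq[OF F(8,2,6) F_le_1 F(5)])
qed

theorem theorem5:
  fixes f :: "nat \<Rightarrow> real" and Fs :: "real \<Rightarrow> real" and \<gamma> :: real
  assumes "is_envelope f"
    and "eventually (\<lambda>j. f (Suc j) \<le> f j) sequentially"
    and "smoothed_envelope_cdf f Fs"
    and "0 < \<gamma>"
    and "in_MDA Fs \<gamma>"
  shows "\<exists>\<kappa>>0. eventually (\<lambda>n. ereal (\<kappa> * m_seq Fs n) \<le> minimax_redundancy f n) sequentially"
proof -
  obtain l T where l: "1 \<le> l" and ratio: "\<And>t. T \<le> t \<Longrightarrow> 1 - Fs (l * t) \<le> (1 - Fs t) / 4"
    using smoothed_envelope_tail_ratio[OF assms(1,3,4,5)] by blast
  obtain Jm where mono_f: "\<And>j. Jm \<le> j \<Longrightarrow> f (Suc j) \<le> f j"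
    using assms(2) by (auto simp: eventually_sequentially)
  obtain J0 where head: "1 \<le> (\<Sum>i<J0. f (Suc i))"
    using is_envelope_partial_sum_ge_1[OF assms(1)] by blast
  define J where "J = max J0 Jm + 1"
  define \<kappa> where "\<kappa> = (1 - exp (- (1 / (4 * l)))) / 4"
  have "eventually (\<lambda>n. ereal (\<kappa> * m_seq Fs n) \<le> minimax_redundancy f n) sequentially"
    using smoothed_envelope_m_seq_eventually[OF assms(1,3), of "max T (2 * real J + 4)"]
  proof eventually_elim
    case (elim n)
    then show ?case
      using ratio[of "m_seq Fs n"] head mono_f unfolding \<kappa>_def
      by (intro minimax_redundancy_ge_m_seq[OF assms(1,3), where J = J and J0 = J0]) (auto simp: J_def l)
  qed
  moreover have "0 < \<kappa>"
    using l by (simp add: \<kappa>_def)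
  ultimately show ?thesis
    by blast
qed

end
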